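(* Assume the standing setup. For distinct $i,j\in[k]$, $x_{ij}=0$ if and only if $y_{ij}=0$. Equivalently, $s_j\cdot\alpha_i\neq\alpha_i$ if and only if $s_j\cdot\beta_i\neq\beta_i$, so the associated digraphs of $V_1$ and $V_2$ (vertex set $[k]$, arrow $i\to j$ iff $s_j$ does not fix the chosen reflection vector of $s_i$) coincide.
   Context: Standing setup: $\mathbb{F}$ is a field of characteristic $0$; $W$ is a group with finite generating set $S=\{s_1,\dots,s_k\}$. A linear map on a finite-dimensional space is a (generalized) reflection if it is diagonalizable and $s-\operatorname{Id}$ has rank $1$; a reflection vector is a nonzero vector in $\operatorname{Im}(s-\operatorname{Id})$. $(V_1,\rho_1)$, $(V_2,\rho_2)$ are irreducible reflection representations of $(W,S)$ (each $s_i$ acts by a reflection), both of dimension $n$. For each $i\in[k]$, $\alpha_i\in V_1$ is a chosen reflection vector of $s_i$ with $s_i\alpha_i=\lambda_i\alpha_i$ and $\beta_i\in V_2$ a chosen reflection vector of $s_i$ with $s_i\beta_i=\mu_i\beta_i$. $d$ is an integer with $1\le d\le n-1$, and $\psi:\bigwedge^dV_1\to\bigwedge^dV_2$ is an isomorphism of $W$-modules ($W$ acting diagonally). For distinct $a,b\in[k]$, the scalars $x_{ab},y_{ab}\in\mathbb{F}$ are defined by $s_b\cdot\alpha_a=\alpha_a+x_{ab}\alpha_b$ and $s_b\cdot\beta_a=\beta_a+y_{ab}\beta_b$. *)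

theory Defs
  imports "Jordan_Normal_Form.DL_Rank" "Jordan_Normal_Form.DL_Submatrix"
    "HOL-Algebra.Generated_Groups"
begin

definition diagonalizable_mat :: "'a::field mat \<Rightarrow> bool" where
  "diagonalizable_mat A \<longleftrightarrow> (\<exists>D. similar_mat A D \<and> diagonal_mat D)"

definition is_reflection :: "nat \<Rightarrow> 'a::field mat \<Rightarrow> bool" where
  "is_reflection n A \<longleftrightarrow> A \<in> carrier_mat n n \<and> diagonalizable_mat A
     \<and> vec_space.rank n (A - 1\<^sub>m n) = 1"

definition reflection_vector :: "nat \<Rightarrow> 'a::field mat \<Rightarrow> 'a vec \<Rightarrow> bool" where
  "reflection_vector n A v \<longleftrightarrow> v \<noteq> 0\<^sub>v n \<and>
     (\<exists>u \<in> carrier_vec n. v = (A - 1\<^sub>m n) *\<^sub>v u)"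

definition is_rep :: "('g, 'b) monoid_scheme \<Rightarrow> nat \<Rightarrow> ('g \<Rightarrow> 'a::field mat) \<Rightarrow> bool" where
  "is_rep W n \<rho> \<longleftrightarrow> (\<forall>g \<in> carrier W. \<rho> g \<in> carrier_mat n n)
     \<and> (\<forall>g \<in> carrier W. \<forall>h \<in> carrier W. \<rho> (g \<otimes>\<^bsub>W\<^esub> h) = \<rho> g * \<rho> h)
     \<and> \<rho> \<one>\<^bsub>W\<^esub> = 1\<^sub>m n"

definition invariant_subspace ::
  "('g, 'b) monoid_scheme \<Rightarrow> nat \<Rightarrow> ('g \<Rightarrow> 'a::field mat) \<Rightarrow> 'a vec set \<Rightarrow> bool" where
  "invariant_subspace W n \<rho> U \<longleftrightarrow> U \<subseteq> carrier_vec n \<and> 0\<^sub>v n \<in> U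
     \<and> (\<forall>u \<in> U. \<forall>v \<in> U. u + v \<in> U) \<and> (\<forall>c. \<forall>u \<in> U. c \<cdot>\<^sub>v u \<in> U)
     \<and> (\<forall>g \<in> carrier W. \<forall>u \<in> U. \<rho> g *\<^sub>v u \<in> U)"

definition irreducible_rep :: "('g, 'b) monoid_scheme \<Rightarrow> nat \<Rightarrow> ('g \<Rightarrow> 'a::field mat) \<Rightarrow> bool" where
  "irreducible_rep W n \<rho> \<longleftrightarrow> is_rep W n \<rho> \<and> n > 0 \<and>
     (\<forall>U. invariant_subspace W n \<rho> U \<longrightarrow> U = {0\<^sub>v n} \<or> U = carrier_vec n)"

definition reflection_rep ::
  "('g, 'b) monoid_scheme \<Rightarrow> nat \<Rightarrow> (nat \<Rightarrow> 'g) \<Rightarrow> nat \<Rightarrow> ('g \<Rightarrow> 'a::field mat) \<Rightarrow> bool" where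
  "reflection_rep W k s n \<rho> \<longleftrightarrow> is_rep W n \<rho> \<and> (\<forall>i<k. is_reflection n (\<rho> (s i)))"

text \<open>The d-th exterior power of F^n, in coordinates w.r.t. the basis
  e_I = e_{i_1} \<and> ... \<and> e_{i_d} (i_1 < ... < i_d), I a d-subset of {0..<n}:
  elements are coefficient functions supported on d-subsets.  A matrix A acts
  by its d-th compound matrix: the coefficient of e_I in A e_J is det A[I,J].\<close>

definition dsubsets :: "nat \<Rightarrow> nat \<Rightarrow> nat set set" where
  "dsubsets n d = {I. I \<subseteq> {..<n} \<and> card I = d}"

definition ext_space :: "nat \<Rightarrow> nat \<Rightarrow> (nat set \<Rightarrow> 'a::field) set" where
  "ext_space n d = {f. \<forall>I. I \<notin> dsubsets n d \<longrightarrow> f I = 0}"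

definition ext_act :: "nat \<Rightarrow> nat \<Rightarrow> 'a::field mat \<Rightarrow> (nat set \<Rightarrow> 'a) \<Rightarrow> (nat set \<Rightarrow> 'a)" where
  "ext_act n d A f = (\<lambda>I. if I \<in> dsubsets n d
      then (\<Sum>J \<in> dsubsets n d. det (submatrix A I J) * f J) else 0)"

definition ext_iso ::
  "('g, 'b) monoid_scheme \<Rightarrow> nat \<Rightarrow> nat \<Rightarrow> ('g \<Rightarrow> 'a::field mat) \<Rightarrow> ('g \<Rightarrow> 'a mat)
     \<Rightarrow> ((nat set \<Rightarrow> 'a) \<Rightarrow> (nat set \<Rightarrow> 'a)) \<Rightarrow> bool" where
  "ext_iso W n d \<rho>1 \<rho>2 \<psi> \<longleftrightarrow>
     bij_betw \<psi> (ext_space n d) (ext_space n d)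
     \<and> (\<forall>f \<in> ext_space n d. \<forall>h \<in> ext_space n d. \<psi> (\<lambda>I. f I + h I) = (\<lambda>I. \<psi> f I + \<psi> h I))
     \<and> (\<forall>c. \<forall>f \<in> ext_space n d. \<psi> (\<lambda>I. c * f I) = (\<lambda>I. c * \<psi> f I))
     \<and> (\<forall>g \<in> carrier W. \<forall>f \<in> ext_space n d.
          \<psi> (ext_act n d (\<rho>1 g) f) = ext_act n d (\<rho>2 g) (\<psi> f))"

end

theory Submission
  imports Defs "Jordan_Normal_Form.DL_Rank_Submatrix"
begin

(* For reflections A and B of F^n, consider whether the image of the d-th exterior power of
   A - 1 meets the fixed space of the d-th exterior power of B nontrivially.  An isomorphism
   of W-modules between the exterior powers preserves this property of the pair (s_i, s_j),
   so it suffices to show that it holds iff x_ij = 0.  Write A = 1 + a f^T and B = 1 + b h^T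
   with f(a) <> 0 <> h(b); then x_ij = h(a).  The image of the exterior power of A - 1
   consists of products a /\ w.  If h(a) = 0, then a /\ v_2 /\ ... /\ v_d with all v_t in
   ker h is such a product and is fixed by B (this uses d < n).  If h(a) <> 0, take a basis
   consisting of a and a basis of ker h: elements of the image have coordinates only on
   basis d-vectors involving a, where the exterior power of B acts by the factor
   1 + h(b) <> 1, so no nonzero element of the image is fixed. *)

lemma finite_dsubsets: "finite (dsubsets n d)"
  unfolding dsubsets_def by (rule finite_subset[of _ "Pow {..<n}"]) auto

lemma dsubsetsD:
  assumes "I \<in> dsubsets n d"
  shows "I \<subseteq> {..<n}" "card I = d" "finite I"
  using assms finite_subset[of I "{..<n}"] unfolding dsubsets_def by auto

lemma card_less_dsubset: "I \<in> dsubsets n d \<Longrightarrow> card {i. i < n \<and> i \<in> I} = d"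
proof -
  assume I: "I \<in> dsubsets n d"
  hence "{i. i < n \<and> i \<in> I} = I" using dsubsetsD(1) by blast
  thus ?thesis using dsubsetsD(2)[OF I] by simp
qed

lemma pick_in_dsubset: "I \<in> dsubsets n d \<Longrightarrow> i < d \<Longrightarrow> pick I i \<in> I"
  using pick_in_set dsubsetsD(2) by metis

lemma pick_dsubset_less: "I \<in> dsubsets n d \<Longrightarrow> i < d \<Longrightarrow> pick I i < n"
  using pick_in_dsubset dsubsetsD(1) by blast

lemma pick_inj_on: "inj_on (pick I) {..<card I}"
proof (rule linorder_inj_onI)
  fix i j assume "i < j" "j \<in> {..<card I}"
  thus "pick I i \<noteq> pick I j" using pick_mono_le[of j I i] by simp
qed linarith

lemma pick_dsubset_eq_iff:
  "I \<in> dsubsets n d \<Longrightarrow> i < d \<Longrightarrow> j < d \<Longrightarrow> pick I i = pick I j \<longleftrightarrow> i = j"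
  using pick_inj_on[of I] dsubsetsD(2)[of I n d] unfolding inj_on_def by auto

lemma pick_image: "finite I \<Longrightarrow> pick I ` {..<card I} = I"
proof
  assume "finite I"
  show "I \<subseteq> pick I ` {..<card I}"
  proof
    fix i assume "i \<in> I"
    hence "card {a \<in> I. a < i} < card I"
      using \<open>finite I\<close> by (intro psubset_card_mono) auto
    thus "i \<in> pick I ` {..<card I}" using pick_card_in_set[OF \<open>i \<in> I\<close>] by force
  qed
qed (auto intro: pick_in_set)

lemma position_in_dsubset:
  assumes "I \<in> dsubsets n d" "i \<in> I"
  shows "card {a \<in> I. a < i} < d"
proof -
  have "{a \<in> I. a < i} \<subset> I" using assms(2) by auto
  thus ?thesis using psubset_card_mono dsubsetsD[OF assms(1)] by metis
qed

lemma obtain_dsubset_containing_avoiding: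
  assumes p: "p < n" and r: "r < n" "r \<noteq> p" and d: "1 \<le> d" "d \<le> n - 1"
  obtains I where "I \<in> dsubsets n d" "p \<in> I" "r \<notin> I"
proof -
  have "d - 1 \<le> card ({0..<n} - {p, r})" using p r d by (simp add: card_Diff_subset)
  then obtain Q where Q: "Q \<subseteq> {0..<n} - {p, r}" "card Q = d - 1" "finite Q"
    by (rule obtain_subset_with_card_n)
  have "insert p Q \<in> dsubsets n d"
    using Q p d unfolding dsubsets_def by (auto simp: card_insert_if)
  moreover have "r \<notin> insert p Q" using Q r by auto
  ultimately show thesis using that by blast
qed

lemma submatrix_carrier_mat:
  "A \<in> carrier_mat m n \<Longrightarrow>
     submatrix A I J \<in> carrier_mat (card {i. i < m \<and> i \<in> I}) (card {j. j < n \<and> j \<in> J})"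
  by (intro carrier_matI) (simp_all only: dim_submatrix carrier_matD)

lemma submatrix_dsubsets_carrier_mat:
  assumes "A \<in> carrier_mat m n" "I \<in> dsubsets m d" "J \<in> dsubsets n e"
  shows "submatrix A I J \<in> carrier_mat d e"
  using submatrix_carrier_mat[OF assms(1), of I J] card_less_dsubset[OF assms(2)]
    card_less_dsubset[OF assms(3)] by simp

lemma submatrix_dsubsets_index:
  assumes "A \<in> carrier_mat m n" "I \<in> dsubsets m d" "J \<in> dsubsets n e" "i < d" "j < e"
  shows "submatrix A I J $$ (i, j) = A $$ (pick I i, pick J j)"
  using assms card_less_dsubset[OF assms(2)] card_less_dsubset[OF assms(3)]
  by (intro submatrix_index) (simp_all only: carrier_matD)

lemma card_less_UNIV: "card {i. i < m \<and> i \<in> UNIV} = m"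
  by simp

lemma submatrix_rows_carrier_mat:
  assumes "A \<in> carrier_mat m n" "I \<in> dsubsets m d"
  shows "submatrix A I UNIV \<in> carrier_mat d n"
  using submatrix_carrier_mat[OF assms(1), of I UNIV] card_less_dsubset[OF assms(2)]
  by (simp only: card_less_UNIV)

lemma submatrix_cols_carrier_mat:
  assumes "A \<in> carrier_mat m n" "J \<in> dsubsets n d"
  shows "submatrix A UNIV J \<in> carrier_mat m d"
  using submatrix_carrier_mat[OF assms(1), of UNIV J] card_less_dsubset[OF assms(2)]
  by (simp only: card_less_UNIV)

lemma submatrix_rows_index:
  assumes "A \<in> carrier_mat m n" "I \<in> dsubsets m d" "i < d" "j < n"
  shows "submatrix A I UNIV $$ (i, j) = A $$ (pick I i, j)"
  using assms card_less_dsubset[OF assms(2)] submatrix_index[of i A I j UNIV]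
  by (simp only: carrier_matD card_less_UNIV pick_UNIV)

lemma submatrix_cols_index:
  assumes "A \<in> carrier_mat m n" "J \<in> dsubsets n d" "i < m" "j < d"
  shows "submatrix A UNIV J $$ (i, j) = A $$ (i, pick J j)"
  using assms card_less_dsubset[OF assms(2)] submatrix_index[of i A UNIV j J]
  by (simp only: carrier_matD card_less_UNIV pick_UNIV)

lemma submatrix_UNIV: "submatrix A UNIV UNIV = A"
  by (rule eq_matI) (auto simp: submatrix_def pick_UNIV)

lemma submatrix_submatrix_UNIV: "submatrix (submatrix A I UNIV) UNIV J = submatrix A I J"
proof (rule eq_matI)
  fix i j assume "i < dim_row (submatrix A I J)" "j < dim_col (submatrix A I J)"
  hence i: "i < card {i. i < dim_row A \<and> i \<in> I}" and j: "j < card {j. j < dim_col A \<and> j \<in> J}"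
    by (simp_all add: dim_submatrix)
  have "pick J j < dim_col A" using pick_le j by (simp add: Collect_conj_eq Int_commute)
  thus "submatrix (submatrix A I UNIV) UNIV J $$ (i, j) = submatrix A I J $$ (i, j)"
    using i j by (simp add: submatrix_index dim_submatrix pick_UNIV)
qed (simp_all add: dim_submatrix)

lemma submatrix_mult:
  assumes A: "A \<in> carrier_mat m n" and B: "B \<in> carrier_mat n q"
  shows "submatrix (A * B) I K = submatrix A I UNIV * submatrix B UNIV K"
proof -
  have dims: "submatrix A I UNIV \<in> carrier_mat (card {i. i < m \<and> i \<in> I}) n"
    "submatrix B UNIV K \<in> carrier_mat n (card {j. j < q \<and> j \<in> K})"
    "submatrix (A * B) I K \<in> carrier_mat (card {i. i < m \<and> i \<in> I}) (card {j. j < q \<and> j \<in> K})"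
    using submatrix_carrier_mat[OF A, of I UNIV] submatrix_carrier_mat[OF B, of UNIV K]
      submatrix_carrier_mat[OF mult_carrier_mat[OF A B], of I K] by simp_all
  show ?thesis
  proof (rule eq_matI)
    fix i k assume "i < dim_row (submatrix A I UNIV * submatrix B UNIV K)"
      and "k < dim_col (submatrix A I UNIV * submatrix B UNIV K)"
    hence i: "i < card {i. i < m \<and> i \<in> I}" and k: "k < card {j. j < q \<and> j \<in> K}"
      using dims by simp_all
    have "pick I i < m" "pick K k < q"
      using pick_le[OF i] pick_le[OF k] by (simp_all add: conj_commute)
    hence "submatrix (A * B) I K $$ (i, k) = (\<Sum>j = 0..<n. A $$ (pick I i, j) * B $$ (j, pick K k))"
      using A B i k by (simp add: submatrix_index scalar_prod_def)
    also have "\<dots> = (\<Sum>j = 0..<n. submatrix A I UNIV $$ (i, j) * submatrix B UNIV K $$ (j, k))"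
      using A B i k by (intro sum.cong refl) (simp add: submatrix_index pick_UNIV)
    also have "\<dots> = (submatrix A I UNIV * submatrix B UNIV K) $$ (i, k)"
      using dims i k by (simp add: scalar_prod_def)
    finally show "submatrix (A * B) I K $$ (i, k) = (submatrix A I UNIV * submatrix B UNIV K) $$ (i, k)" .
  qed (use dims in simp_all)
qed

subsection \<open>The Cauchy--Binet formula\<close>

(* An injective map from {0..<d} to {0..<n} is determined by its image J and by the
   permutation of the positions in J that it induces. *)

definition injective_index_maps :: "nat \<Rightarrow> nat \<Rightarrow> (nat \<Rightarrow> nat) set" where
  "injective_index_maps n d = {f. (\<forall>i\<in>{0..<d}. f i \<in> {0..<n}) \<and> (\<forall>i. i \<notin> {0..<d} \<longrightarrow> f i = i)
     \<and> inj_on f {0..<d}}"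

definition pick_comp :: "nat \<Rightarrow> nat set \<Rightarrow> (nat \<Rightarrow> nat) \<Rightarrow> nat \<Rightarrow> nat" where
  "pick_comp d J p i = (if i < d then pick J (p i) else i)"

definition split_index_map :: "nat \<Rightarrow> (nat \<Rightarrow> nat) \<Rightarrow> nat set \<times> (nat \<Rightarrow> nat)" where
  "split_index_map d f =
     (f ` {0..<d}, \<lambda>i. if i < d then card {a \<in> f ` {0..<d}. a < f i} else i)"

lemma pick_comp_injective_index_map:
  assumes J: "J \<in> dsubsets n d" and p: "p permutes {0..<d}"
  shows "pick_comp d J p \<in> injective_index_maps n d"
    and "split_index_map d (pick_comp d J p) = (J, p)"
proof -
  have pd: "i < d \<Longrightarrow> p i < d" for i using permutes_in_image[OF p] by simp
  have inj_p: "inj_on p {0..<d}" using permutes_inj_on[OF p] .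
  have "inj_on (pick J \<circ> p) {0..<d}"
    using pick_inj_on[of J] dsubsetsD(2)[OF J] pd
    by (intro comp_inj_on[OF inj_p]) (auto intro: inj_on_subset simp: permutes_image[OF p])
  hence "inj_on (pick_comp d J p) {0..<d}" by (auto simp: inj_on_def pick_comp_def)
  thus "pick_comp d J p \<in> injective_index_maps n d"
    unfolding injective_index_maps_def pick_comp_def using pick_dsubset_less[OF J] pd by auto
  have "pick_comp d J p ` {0..<d} = pick J ` (p ` {0..<d})" by (auto simp: pick_comp_def)
  also have "\<dots> = J"
    using pick_image[of J] dsubsetsD[OF J] permutes_image[OF p] by (simp add: atLeast0LessThan)
  finally have img: "pick_comp d J p ` {0..<d} = J" .
  have "card {a \<in> J. a < pick J (p i)} = p i" if "i < d" for i
    using card_pick[of "p i" J] pd[OF that] dsubsetsD(2)[OF J] by simp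
  hence "(\<lambda>i. if i < d then card {a \<in> J. a < pick_comp d J p i} else i) = p"
    using permutes_not_in[OF p] by (fastforce simp: pick_comp_def)
  thus "split_index_map d (pick_comp d J p) = (J, p)"
    unfolding split_index_map_def img by (simp add: pick_comp_def)
qed

lemma split_injective_index_map:
  assumes f: "f \<in> injective_index_maps n d"
  shows "split_index_map d f \<in> dsubsets n d \<times> {p. p permutes {0..<d}}"
    and "case_prod (pick_comp d) (split_index_map d f) = f"
proof -
  let ?J = "f ` {0..<d}"
  let ?q = "\<lambda>i. if i < d then card {a \<in> ?J. a < f i} else i"
  have inj: "inj_on f {0..<d}" and range: "\<forall>i\<in>{0..<d}. f i \<in> {0..<n}"
    and outside: "\<forall>i. i \<notin> {0..<d} \<longrightarrow> f i = i"
    using f unfolding injective_index_maps_def by auto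
  have J: "?J \<in> dsubsets n d"
    unfolding dsubsets_def using range card_image[OF inj] by auto
  have pick_q: "pick ?J (?q i) = f i" if "i < d" for i
    using pick_card_in_set[of "f i" ?J] that by simp
  have "inj_on ?q {0..<d}"
  proof (rule inj_onI)
    fix i j assume i: "i \<in> {0..<d}" and j: "j \<in> {0..<d}" and "?q i = ?q j"
    hence "f i = f j" using pick_q[of i] pick_q[of j] by simp
    thus "i = j" using inj_onD[OF inj _ i j] by simp
  qed
  moreover have "?q ` {0..<d} \<subseteq> {0..<d}"
    using position_in_dsubset[OF J] by auto
  ultimately have "bij_betw ?q {0..<d} {0..<d}"
    unfolding bij_betw_def using endo_inj_surj[of "{0..<d}" ?q] by simp
  hence "?q permutes {0..<d}" by (rule bij_imp_permutes) simp
  thus "split_index_map d f \<in> dsubsets n d \<times> {p. p permutes {0..<d}}"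
    using J unfolding split_index_map_def by simp
  have "pick_comp d ?J ?q = f"
  proof
    fix i show "pick_comp d ?J ?q i = f i"
      using pick_q[of i] outside by (simp add: pick_comp_def)
  qed
  thus "case_prod (pick_comp d) (split_index_map d f) = f"
    unfolding split_index_map_def by simp
qed

lemma bij_betw_pick_comp:
  "bij_betw (case_prod (pick_comp d))
     (dsubsets n d \<times> {p. p permutes {0..<d}}) (injective_index_maps n d)"
proof (rule bij_betw_byWitness[where f' = "split_index_map d"])
  show "\<forall>x \<in> dsubsets n d \<times> {p. p permutes {0..<d}}. split_index_map d (case_prod (pick_comp d) x) = x"
    by (auto simp: pick_comp_injective_index_map)
  show "\<forall>f \<in> injective_index_maps n d. case_prod (pick_comp d) (split_index_map d f) = f"
    using split_injective_index_map(2) by blast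
  show "case_prod (pick_comp d) ` (dsubsets n d \<times> {p. p permutes {0..<d}}) \<subseteq> injective_index_maps n d"
    using pick_comp_injective_index_map(1) by auto
  show "split_index_map d ` injective_index_maps n d \<subseteq> dsubsets n d \<times> {p. p permutes {0..<d}}"
    using split_injective_index_map(1) by blast
qed

lemma sum_permutations_pick_comp:
  fixes X Y :: "'a::comm_ring_1 mat"
  assumes X: "X \<in> carrier_mat d n" and Y: "Y \<in> carrier_mat n d" and J: "J \<in> dsubsets n d"
  shows "(\<Sum>p | p permutes {0..<d}. (\<Prod>i = 0..<d. X $$ (i, pick_comp d J p i))
            * det (mat\<^sub>r d d (\<lambda>i. row Y (pick_comp d J p i))))
       = det (submatrix X UNIV J) * det (submatrix Y J UNIV)"
proof -
  have XJ: "submatrix X UNIV J \<in> carrier_mat d d" and YJ: "submatrix Y J UNIV \<in> carrier_mat d d"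
    using submatrix_cols_carrier_mat[OF X J] submatrix_rows_carrier_mat[OF Y J] .
  have "(\<Prod>i = 0..<d. X $$ (i, pick_comp d J p i)) * det (mat\<^sub>r d d (\<lambda>i. row Y (pick_comp d J p i)))
      = signof p * (\<Prod>i = 0..<d. submatrix X UNIV J $$ (i, p i)) * det (submatrix Y J UNIV)"
    if p: "p permutes {0..<d}" for p
  proof -
    have pd: "i < d \<Longrightarrow> p i < d" for i using permutes_in_image[OF p] by simp
    have "mat\<^sub>r d d (\<lambda>i. row Y (pick_comp d J p i)) = mat d d (\<lambda>(i, j). submatrix Y J UNIV $$ (p i, j))"
      using Y pd pick_dsubset_less[OF J]
      by (intro eq_matI) (simp_all add: pick_comp_def submatrix_rows_index[OF Y J])
    hence "det (mat\<^sub>r d d (\<lambda>i. row Y (pick_comp d J p i))) = signof p * det (submatrix Y J UNIV)"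
      using det_permute_rows[OF YJ p] by simp
    moreover have "(\<Prod>i = 0..<d. X $$ (i, pick_comp d J p i)) = (\<Prod>i = 0..<d. submatrix X UNIV J $$ (i, p i))"
      using pd by (intro prod.cong) (simp_all add: pick_comp_def submatrix_cols_index[OF X J])
    ultimately show ?thesis by simp
  qed
  hence "(\<Sum>p | p permutes {0..<d}. (\<Prod>i = 0..<d. X $$ (i, pick_comp d J p i))
            * det (mat\<^sub>r d d (\<lambda>i. row Y (pick_comp d J p i))))
       = (\<Sum>p | p permutes {0..<d}. signof p * (\<Prod>i = 0..<d. submatrix X UNIV J $$ (i, p i)))
            * det (submatrix Y J UNIV)"
    by (simp add: sum_distrib_right)
  also have "\<dots> = det (submatrix X UNIV J) * det (submatrix Y J UNIV)"
    unfolding det_def'[OF XJ] ..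
  finally show ?thesis .
qed

theorem Cauchy_Binet:
  fixes X Y :: "'a::comm_ring_1 mat"
  assumes X: "X \<in> carrier_mat d n" and Y: "Y \<in> carrier_mat n d"
  shows "det (X * Y) = (\<Sum>J \<in> dsubsets n d. det (submatrix X UNIV J) * det (submatrix Y J UNIV))"
proof -
  let ?F = "{f. (\<forall>i\<in>{0..<d}. f i \<in> {0..<n}) \<and> (\<forall>i. i \<notin> {0..<d} \<longrightarrow> f i = i)}"
  let ?h = "\<lambda>f. (\<Prod>i = 0..<d. X $$ (i, f i)) * det (mat\<^sub>r d d (\<lambda>i. row Y (f i)))"
  have "det (X * Y) = (\<Sum>f \<in> ?F. det (mat\<^sub>r d d (\<lambda>i. X $$ (i, f i) \<cdot>\<^sub>v row Y (f i))))"
    unfolding mat_mul_finsum_alt[OF X Y] by (rule det_linear_rows_sum) (use Y in auto)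
  also have "\<dots> = sum ?h ?F"
    by (intro sum.cong refl det_rows_mul) (use Y in auto)
  also have "\<dots> = sum ?h (injective_index_maps n d)"
  proof (rule sum.mono_neutral_right)
    show "finite ?F" by (rule finite_bounded_functions) auto
    show "injective_index_maps n d \<subseteq> ?F" unfolding injective_index_maps_def by blast
    show "\<forall>f \<in> ?F - injective_index_maps n d. ?h f = 0"
    proof
      fix f assume "f \<in> ?F - injective_index_maps n d"
      then obtain i j where "i < d" "j < d" "i \<noteq> j" "f i = f j"
        unfolding injective_index_maps_def inj_on_def by auto
      hence "det (mat\<^sub>r d d (\<lambda>i. row Y (f i))) = 0"
        by (intro det_identical_rows[of _ d i j]) auto
      thus "?h f = 0" by simp
    qed
  qed
  also have "\<dots> = (\<Sum>(J, p) \<in> dsubsets n d \<times> {p. p permutes {0..<d}}. ?h (pick_comp d J p))"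
    using sum.reindex_bij_betw[OF bij_betw_pick_comp, of ?h] by (simp add: case_prod_beta')
  also have "\<dots> = (\<Sum>J \<in> dsubsets n d. \<Sum>p | p permutes {0..<d}. ?h (pick_comp d J p))"
    by (rule sum.cartesian_product[symmetric])
  also have "\<dots> = (\<Sum>J \<in> dsubsets n d. det (submatrix X UNIV J) * det (submatrix Y J UNIV))"
    by (intro sum.cong refl sum_permutations_pick_comp[OF X Y])
  finally show ?thesis .
qed

lemma det_submatrix_mult:
  fixes A B :: "'a::comm_ring_1 mat"
  assumes A: "A \<in> carrier_mat n n" and B: "B \<in> carrier_mat n n"
    and I: "I \<in> dsubsets n d" and K: "K \<in> dsubsets n d"
  shows "det (submatrix (A * B) I K) = (\<Sum>J \<in> dsubsets n d. det (submatrix A I J) * det (submatrix B J K))"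
proof -
  from Cauchy_Binet[OF submatrix_rows_carrier_mat[OF A I] submatrix_cols_carrier_mat[OF B K]]
  show ?thesis
    by (simp add: submatrix_mult[OF A B] submatrix_submatrix_UNIV submatrix_split[symmetric])
qed

lemma det_zero_row:
  fixes A :: "'a::comm_ring_1 mat"
  assumes A: "A \<in> carrier_mat m m" and r: "r < m" and zero: "\<And>j. j < m \<Longrightarrow> A $$ (r, j) = 0"
  shows "det A = 0"
proof -
  have "(\<Prod>i = 0..<m. A $$ (i, p i)) = 0" if p: "p permutes {0..<m}" for p
    using r zero[of "p r"] permutes_in_image[OF p, of r] by (intro prod_zero) auto
  thus ?thesis unfolding det_def'[OF A] by simp
qed

lemma det_zero_col:
  fixes A :: "'a::comm_ring_1 mat"
  assumes A: "A \<in> carrier_mat m m" and c: "c < m" and zero: "\<And>i. i < m \<Longrightarrow> A $$ (i, c) = 0"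
  shows "det A = 0"
  using det_zero_row[of "transpose_mat A" m c] det_transpose[OF A] A c zero by simp

lemma det_submatrix_dsubsets_zero_col:
  fixes A :: "'a::comm_ring_1 mat"
  assumes A: "A \<in> carrier_mat n n" and I: "I \<in> dsubsets n d" and J: "J \<in> dsubsets n d"
    and j: "j \<in> J" and zero: "\<And>i. i \<in> I \<Longrightarrow> A $$ (i, j) = 0"
  shows "det (submatrix A I J) = 0"
  using position_in_dsubset[OF J j] pick_card_in_set[OF j] pick_in_dsubset[OF I]
  by (intro det_zero_col[OF submatrix_dsubsets_carrier_mat[OF A I J]])
    (auto simp: submatrix_dsubsets_index[OF A I J] zero)

lemma det_submatrix_one:
  assumes I: "I \<in> dsubsets n d" and J: "J \<in> dsubsets n d"
  shows "det (submatrix (1\<^sub>m n :: 'a::comm_ring_1 mat) I J) = (if I = J then 1 else 0)"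
proof (cases "I = J")
  case True
  have "submatrix (1\<^sub>m n) I I = (1\<^sub>m d :: 'a mat)"
    using pick_dsubset_less[OF I] pick_dsubset_eq_iff[OF I]
    by (intro eq_matI) (auto simp: submatrix_dsubsets_index[OF one_carrier_mat I I]
        carrier_matD[OF submatrix_dsubsets_carrier_mat[OF one_carrier_mat I I]])
  thus ?thesis using True by simp
next
  case False
  hence "\<not> J \<subseteq> I" using dsubsetsD[OF I] dsubsetsD[OF J] card_subset_eq by metis
  then obtain j where j: "j \<in> J" "j \<notin> I" by auto
  have "det (submatrix (1\<^sub>m n :: 'a mat) I J) = 0"
  proof (rule det_submatrix_dsubsets_zero_col[OF one_carrier_mat I J j(1)])
    fix i assume "i \<in> I"
    moreover have "i \<in> I \<Longrightarrow> i < n" "j < n" using dsubsetsD(1)[OF I] dsubsetsD(1)[OF J] j by auto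
    ultimately show "1\<^sub>m n $$ (i, j) = 0" using j(2) by auto
  qed
  thus ?thesis using False by simp
qed

lemma ext_act_in_ext_space: "ext_act n d A f \<in> ext_space n d"
  unfolding ext_act_def ext_space_def by auto

lemma ext_act_mult:
  fixes A B :: "'a::field mat"
  assumes A: "A \<in> carrier_mat n n" and B: "B \<in> carrier_mat n n"
  shows "ext_act n d (A * B) f = ext_act n d A (ext_act n d B f)"
proof
  fix I
  show "ext_act n d (A * B) f I = ext_act n d A (ext_act n d B f) I"
  proof (cases "I \<in> dsubsets n d")
    case True
    have "ext_act n d A (ext_act n d B f) I
        = (\<Sum>J \<in> dsubsets n d. \<Sum>K \<in> dsubsets n d. det (submatrix A I J) * det (submatrix B J K) * f K)"
      unfolding ext_act_def using True by (simp add: sum_distrib_left mult.assoc)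
    also have "\<dots> = (\<Sum>K \<in> dsubsets n d. det (submatrix (A * B) I K) * f K)"
      by (subst sum.swap) (simp add: det_submatrix_mult[OF A B True] sum_distrib_right)
    finally show ?thesis unfolding ext_act_def using True by simp
  qed (simp add: ext_act_def)
qed

lemma ext_act_one:
  assumes f: "f \<in> ext_space n d"
  shows "ext_act n d (1\<^sub>m n :: 'a::field mat) f = f"
proof
  fix I
  show "ext_act n d (1\<^sub>m n) f I = f I"
  proof (cases "I \<in> dsubsets n d")
    case True
    hence "ext_act n d (1\<^sub>m n) f I = (\<Sum>J \<in> dsubsets n d. if J = I then f J else 0)"
      unfolding ext_act_def by (auto simp: det_submatrix_one intro: sum.cong)
    thus ?thesis using True finite_dsubsets by simp
  qed (use f in \<open>simp add: ext_act_def ext_space_def\<close>)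
qed

lemma ext_act_add:
  "ext_act n d A (\<lambda>I. f I + g I) = (\<lambda>I. ext_act n d A f I + ext_act n d A g I)"
  unfolding ext_act_def by (auto simp: sum.distrib distrib_left)

lemma ext_act_smult: "ext_act n d A (\<lambda>I. c * f I) = (\<lambda>I. c * ext_act n d A f I)"
  unfolding ext_act_def by (auto simp: sum_distrib_left ac_simps)

(* The coordinates of the wedge product of the columns of V. *)
definition pluecker :: "nat \<Rightarrow> nat \<Rightarrow> 'a::comm_ring_1 mat \<Rightarrow> nat set \<Rightarrow> 'a" where
  "pluecker n d V = (\<lambda>I. if I \<in> dsubsets n d then det (submatrix V I UNIV) else 0)"

lemma ext_act_pluecker:
  fixes A V :: "'a::field mat"
  assumes A: "A \<in> carrier_mat n n" and V: "V \<in> carrier_mat n d"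
  shows "ext_act n d A (pluecker n d V) = pluecker n d (A * V)"
proof
  fix I
  show "ext_act n d A (pluecker n d V) I = pluecker n d (A * V) I"
  proof (cases "I \<in> dsubsets n d")
    case True
    from Cauchy_Binet[OF submatrix_rows_carrier_mat[OF A True] V] show ?thesis
      unfolding ext_act_def pluecker_def using True
      by (simp add: submatrix_submatrix_UNIV submatrix_mult[OF A V] submatrix_UNIV cong: sum.cong)
  qed (simp add: ext_act_def pluecker_def)
qed

lemma pluecker_mult:
  fixes V T :: "'a::comm_ring_1 mat"
  assumes V: "V \<in> carrier_mat n d" and T: "T \<in> carrier_mat d d"
  shows "pluecker n d (V * T) = (\<lambda>I. det T * pluecker n d V I)"
proof
  fix I
  show "pluecker n d (V * T) I = det T * pluecker n d V I"
  proof (cases "I \<in> dsubsets n d")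
    case True
    from submatrix_rows_carrier_mat[OF V True] show ?thesis
      unfolding pluecker_def using True T
      by (simp add: submatrix_mult[OF V T] submatrix_UNIV det_mult)
  qed (simp add: pluecker_def)
qed

lemma det_identity_except_row:
  fixes M :: "'a::comm_ring_1 mat"
  assumes M: "M \<in> carrier_mat m m" and r: "r < m"
    and id: "\<And>i j. i < m \<Longrightarrow> j < m \<Longrightarrow> i \<noteq> r \<Longrightarrow> M $$ (i, j) = (if i = j then 1 else 0)"
  shows "det M = M $$ (r, r)"
proof -
  have vanish: "(\<Prod>i = 0..<m. M $$ (i, p i)) = 0" if p: "p permutes {0..<m}" "p \<noteq> id" for p
  proof -
    have "\<exists>i<m. i \<noteq> r \<and> p i \<noteq> i"
    proof (rule ccontr)
      assume "\<not> ?thesis"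
      hence fixed: "i < m \<Longrightarrow> i \<noteq> r \<Longrightarrow> p i = i" for i by auto
      have "p r < m" using permutes_in_image[OF p(1)] r by simp
      hence "p r = r" using fixed[of "p r"] permutes_inj[OF p(1)] by (metis injD)
      hence "p = id" using fixed permutes_not_in[OF p(1)] by fastforce
      thus False using p(2) by simp
    qed
    then obtain i where "i < m" "i \<noteq> r" "p i \<noteq> i" by blast
    moreover have "p i < m" using permutes_in_image[OF p(1)] \<open>i < m\<close> by simp
    ultimately show ?thesis using id by (intro prod_zero) (auto intro!: bexI[of _ i])
  qed
  have "det M = (\<Sum>p \<in> {id}. signof p * (\<Prod>i = 0..<m. M $$ (i, p i)))"
    unfolding det_def'[OF M]
    by (rule sum.mono_neutral_right) (auto simp: vanish permutes_id finite_permutations)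
  also have "\<dots> = M $$ (r, r) * (\<Prod>i \<in> {0..<m} - {r}. M $$ (i, i))"
    using r by (simp add: prod.remove)
  also have "(\<Prod>i \<in> {0..<m} - {r}. M $$ (i, i)) = 1"
    by (rule prod.neutral) (simp add: id)
  finally show ?thesis by simp
qed

lemma det_identity_except_col:
  fixes M :: "'a::comm_ring_1 mat"
  assumes M: "M \<in> carrier_mat m m" and c: "c < m"
    and id: "\<And>i j. i < m \<Longrightarrow> j < m \<Longrightarrow> j \<noteq> c \<Longrightarrow> M $$ (i, j) = (if i = j then 1 else 0)"
  shows "det M = M $$ (c, c)"
  using det_identity_except_row[of "transpose_mat M" m c] det_transpose[OF M] M c id by simp

lemma det_submatrix_identity_except_col:
  fixes M :: "'a::comm_ring_1 mat"
  assumes M: "M \<in> carrier_mat n n" and I: "I \<in> dsubsets n d" and p: "p \<in> I"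
    and id: "\<And>i j. i \<in> I \<Longrightarrow> j \<in> I \<Longrightarrow> j \<noteq> p \<Longrightarrow> M $$ (i, j) = (if i = j then 1 else 0)"
  shows "det (submatrix M I I) = M $$ (p, p)"
proof -
  let ?c = "card {a \<in> I. a < p}"
  have c: "?c < d" "pick I ?c = p" using position_in_dsubset[OF I p] pick_card_in_set[OF p] by auto
  have "det (submatrix M I I) = submatrix M I I $$ (?c, ?c)"
  proof (rule det_identity_except_col[OF submatrix_dsubsets_carrier_mat[OF M I I] c(1)])
    fix a t assume a: "a < d" and t: "t < d" and "t \<noteq> ?c"
    hence "pick I t \<noteq> p" using c pick_dsubset_eq_iff[OF I t c(1)] by auto
    thus "submatrix M I I $$ (a, t) = (if a = t then 1 else 0)"
      using id[OF pick_in_dsubset[OF I a] pick_in_dsubset[OF I t]] pick_dsubset_eq_iff[OF I a t]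
      by (simp add: submatrix_dsubsets_index[OF M I I a t])
  qed
  thus ?thesis using c by (simp add: submatrix_dsubsets_index[OF M I I])
qed

lemma det_two:
  fixes A :: "'a::comm_ring_1 mat"
  assumes A: "A \<in> carrier_mat 2 2"
  shows "det A = A $$ (0, 0) * A $$ (1, 1) - A $$ (0, 1) * A $$ (1, 0)"
proof -
  have "det A = A $$ (0, 0) * cofactor A 0 0 + A $$ (1, 0) * cofactor A 1 0"
    using laplace_expansion_column[OF A, of 0] by (simp add: numeral_2_eq_2)
  moreover have "mat_delete A 0 0 \<in> carrier_mat 1 1" "mat_delete A 1 0 \<in> carrier_mat 1 1"
    using mat_delete_carrier[OF A] by simp_all
  ultimately show ?thesis
    using A by (simp add: cofactor_def det_single mat_delete_def algebra_simps)
qed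

lemma pick_doubleton:
  assumes "a < (b::nat)"
  shows "pick {a, b} 0 = a" and "pick {a, b} 1 = b"
proof -
  show a: "pick {a, b} 0 = a" using assms by (simp, intro Least_equality) auto
  have "pick {a, b} 1 = (LEAST x. x \<in> {a, b} \<and> a < x)" using a by simp
  also have "\<dots> = b" using assms by (intro Least_equality) auto
  finally show "pick {a, b} 1 = b" .
qed

lemma minor_two_rank_le_one_ordered:
  fixes M :: "'a::field mat"
  assumes M: "M \<in> carrier_mat n n" and rank: "vec_space.rank n M \<le> 1"
    and ab: "a < b" "b < n" and ce: "c < e" "e < n"
  shows "M $$ (a, c) * M $$ (b, e) = M $$ (a, e) * M $$ (b, c)"
proof (rule ccontr)
  assume ne: "M $$ (a, c) * M $$ (b, e) \<noteq> M $$ (a, e) * M $$ (b, c)"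
  have rows: "{i. i < n \<and> i \<in> {a, b}} = {a, b}" and cols: "{j. j < n \<and> j \<in> {c, e}} = {c, e}"
    using ab ce by auto
  have two: "card {a, b} = 2" "card {c, e} = 2" using ab ce by simp_all
  let ?S = "submatrix M {a, b} {c, e}"
  have S: "?S \<in> carrier_mat 2 2"
    using submatrix_carrier_mat[OF M, of "{a, b}" "{c, e}"] unfolding rows cols two .
  have entry: "?S $$ (i, j) = M $$ (pick {a, b} i, pick {c, e} j)" if "i < 2" "j < 2" for i j
    using that M by (intro submatrix_index) (simp_all only: carrier_matD rows cols two)
  have "det ?S = M $$ (a, c) * M $$ (b, e) - M $$ (a, e) * M $$ (b, c)"
    unfolding det_two[OF S] using entry pick_doubleton[OF ab(1)] pick_doubleton[OF ce(1)] by simp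
  hence "card {j. j < n \<and> j \<in> {c, e}} \<le> vec_space.rank n M"
    using ne by (intro vec_space.rank_gt_minor[OF M, of "{a, b}"]) simp
  thus False using rank two unfolding cols by simp
qed

lemma minor_two_rank_le_one:
  fixes M :: "'a::field mat"
  assumes M: "M \<in> carrier_mat n n" and rank: "vec_space.rank n M \<le> 1"
    and "a < n" "b < n" "c < n" "e < n"
  shows "M $$ (a, c) * M $$ (b, e) = M $$ (a, e) * M $$ (b, c)"
proof -
  note ordered = minor_two_rank_le_one_ordered[OF M rank]
  consider "a = b" | "c = e" | "a < b" "c < e" | "a < b" "e < c" | "b < a" "c < e" | "b < a" "e < c"
    by linarith
  thus ?thesis
    by cases (use ordered[of a b c e] ordered[of a b e c] ordered[of b a c e] ordered[of b a e c]
        assms in \<open>simp_all add: ac_simps\<close>)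
qed

lemma rank_le_one_factor:
  fixes M :: "'a::field mat"
  assumes M: "M \<in> carrier_mat n n" and rank: "vec_space.rank n M \<le> 1"
    and u: "u \<in> carrier_vec n" and p: "p < n" and nonzero: "(M *\<^sub>v u) $ p \<noteq> 0"
    and i: "i < n" and j: "j < n"
  shows "M $$ (i, j) = (M *\<^sub>v u) $ i * (M $$ (p, j) / (M *\<^sub>v u) $ p)"
proof -
  have Mu: "(M *\<^sub>v u) $ k = (\<Sum>l<n. M $$ (k, l) * u $ l)" if "k < n" for k
    using M u that by (simp add: scalar_prod_def lessThan_atLeast0 ac_simps)
  have "M $$ (i, j) * (M *\<^sub>v u) $ p - M $$ (p, j) * (M *\<^sub>v u) $ i
     = (\<Sum>l<n. u $ l * (M $$ (i, j) * M $$ (p, l) - M $$ (i, l) * M $$ (p, j)))"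
    unfolding Mu[OF p] Mu[OF i] by (simp add: sum_distrib_left sum_subtractf algebra_simps)
  also have "\<dots> = 0"
    using minor_two_rank_le_one[OF M rank i p j] by (intro sum.neutral) (simp add: ac_simps)
  finally show ?thesis using nonzero by (simp add: field_simps)
qed

subsection \<open>Reflections as rank-one updates of the identity\<close>

definition rank_one_update :: "nat \<Rightarrow> 'a::comm_ring_1 vec \<Rightarrow> 'a vec \<Rightarrow> 'a mat" where
  "rank_one_update n a f = mat n n (\<lambda>(i, j). (if i = j then 1 else 0) + a $ i * f $ j)"

lemma rank_one_update_carrier_mat [simp]: "rank_one_update n a f \<in> carrier_mat n n"
  by (simp add: rank_one_update_def)

lemma dim_rank_one_update [simp]:
  "dim_row (rank_one_update n a f) = n" "dim_col (rank_one_update n a f) = n"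
  by (simp_all add: rank_one_update_def)

lemma index_rank_one_update [simp]:
  "i < n \<Longrightarrow> j < n \<Longrightarrow> rank_one_update n a f $$ (i, j) = (if i = j then 1 else 0) + a $ i * f $ j"
  by (simp add: rank_one_update_def)

lemma rank_one_update_mult_vec:
  assumes a: "a \<in> carrier_vec n" and v: "v \<in> carrier_vec n"
  shows "rank_one_update n a f *\<^sub>v v = v + (f \<bullet> v) \<cdot>\<^sub>v a"
proof (rule eq_vecI)
  fix i assume "i < dim_vec (v + (f \<bullet> v) \<cdot>\<^sub>v a)"
  hence i: "i < n" using a by simp
  have "(rank_one_update n a f *\<^sub>v v) $ i = (\<Sum>j = 0..<n. rank_one_update n a f $$ (i, j) * v $ j)"
    using i v by (simp add: scalar_prod_def)
  also have "\<dots> = (\<Sum>j = 0..<n. (if i = j then v $ j else 0) + a $ i * (f $ j * v $ j))"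
    using i by (intro sum.cong) (auto simp: algebra_simps)
  also have "\<dots> = v $ i + a $ i * (f \<bullet> v)"
    using i v by (simp add: scalar_prod_def sum.distrib sum_distrib_left)
  finally show "(rank_one_update n a f *\<^sub>v v) $ i = (v + (f \<bullet> v) \<cdot>\<^sub>v a) $ i"
    using i a v by (simp add: ac_simps)
qed (use a v in simp)

lemma nonzero_vec_entry:
  assumes "v \<in> carrier_vec n" "v \<noteq> 0\<^sub>v n"
  obtains p where "p < n" "v $ p \<noteq> 0"
  using assms by (metis eq_vecI carrier_vecD index_zero_vec)

lemma reflection_vector_carrier_vec:
  assumes "A \<in> carrier_mat n n" "reflection_vector n A a"
  shows "a \<in> carrier_vec n"
proof -
  have "A - 1\<^sub>m n \<in> carrier_mat n n" by (rule minus_carrier_mat) simp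
  thus ?thesis using assms(2) unfolding reflection_vector_def by auto
qed

lemma reflection_eq_rank_one_update:
  assumes A: "is_reflection n A" and a: "reflection_vector n A a"
  obtains f where "f \<in> carrier_vec n" "A = rank_one_update n a f"
proof -
  let ?N = "A - 1\<^sub>m n"
  have A_carrier: "A \<in> carrier_mat n n" and rank: "vec_space.rank n ?N \<le> 1"
    using A unfolding is_reflection_def by auto
  have N: "?N \<in> carrier_mat n n" by (rule minus_carrier_mat) simp
  obtain u where u: "u \<in> carrier_vec n" and a_def: "a = ?N *\<^sub>v u" and a0: "a \<noteq> 0\<^sub>v n"
    using a unfolding reflection_vector_def by blast
  obtain p where p: "p < n" "a $ p \<noteq> 0"
    using nonzero_vec_entry[OF reflection_vector_carrier_vec[OF A_carrier a] a0] .
  define f where "f = vec n (\<lambda>j. ?N $$ (p, j) / a $ p)"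
  have "A = rank_one_update n a f"
  proof (rule eq_matI)
    fix i j assume "i < dim_row (rank_one_update n a f)" "j < dim_col (rank_one_update n a f)"
    hence i: "i < n" and j: "j < n" by simp_all
    have "?N $$ (i, j) = a $ i * f $ j"
      using rank_le_one_factor[OF N rank u p(1) _ i j] p(2) j unfolding a_def f_def by simp
    thus "A $$ (i, j) = rank_one_update n a f $$ (i, j)"
      using A_carrier i j by (cases "i = j") (auto simp: diff_eq_eq add.commute)
  qed (use A_carrier in simp_all)
  thus thesis using that[of f] unfolding f_def by simp
qed

lemma diagonalizable_mat_minus_one:
  assumes "diagonalizable_mat A" and A: "A \<in> carrier_mat n n"
  shows "diagonalizable_mat (A - 1\<^sub>m n)"
proof -
  obtain D P Q where D: "diagonal_mat D" and wit: "similar_mat_wit A D P Q"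
    using assms(1) unfolding diagonalizable_mat_def similar_mat_def by blast
  have c: "D \<in> carrier_mat n n" "P \<in> carrier_mat n n" "Q \<in> carrier_mat n n"
    and PQ: "P * Q = 1\<^sub>m n" and QP: "Q * P = 1\<^sub>m n" and A_eq: "A = P * D * Q"
    using wit A unfolding similar_mat_wit_def Let_def by auto
  have E: "D - 1\<^sub>m n \<in> carrier_mat n n" by (rule minus_carrier_mat) simp
  have "P * (D - 1\<^sub>m n) * Q = P * ((D - 1\<^sub>m n) * Q)" by (rule assoc_mult_mat[OF c(2) E c(3)])
  also have "(D - 1\<^sub>m n) * Q = D * Q - Q"
    using minus_mult_distrib_mat[OF c(1) one_carrier_mat c(3)] c(3) by simp
  also have "P * (D * Q - Q) = P * D * Q - P * Q"
    using mult_minus_distrib_mat[OF c(2), of "D * Q" n Q] c assoc_mult_mat[OF c(2) c(1) c(3)] by simp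
  finally have "P * (D - 1\<^sub>m n) * Q = A - 1\<^sub>m n" unfolding A_eq PQ .
  moreover have "A - 1\<^sub>m n \<in> carrier_mat n n" by (rule minus_carrier_mat) simp
  ultimately have "similar_mat_wit (A - 1\<^sub>m n) (D - 1\<^sub>m n) P Q"
    using c E PQ QP unfolding similar_mat_wit_def by (auto simp: Let_def)
  moreover have "diagonal_mat (D - 1\<^sub>m n)" using D c unfolding diagonal_mat_def by simp
  ultimately show ?thesis unfolding diagonalizable_mat_def similar_mat_def by blast
qed

lemma diagonal_mat_mult_vec:
  assumes D: "D \<in> carrier_mat n n" "diagonal_mat D" and v: "v \<in> carrier_vec n" and i: "i < n"
  shows "(D *\<^sub>v v) $ i = D $$ (i, i) * v $ i"
proof -
  have "(D *\<^sub>v v) $ i = (\<Sum>j = 0..<n. D $$ (i, j) * v $ j)"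
    using D v i by (simp add: scalar_prod_def)
  also have "\<dots> = (\<Sum>j = 0..<n. if j = i then D $$ (i, j) * v $ j else 0)"
    using D i unfolding diagonal_mat_def by (intro sum.cong) auto
  finally show ?thesis using i by simp
qed

lemma diagonalizable_mat_kernel_square:
  assumes "diagonalizable_mat N" and N: "N \<in> carrier_mat n n" and v: "v \<in> carrier_vec n"
    and square_zero: "N *\<^sub>v (N *\<^sub>v v) = 0\<^sub>v n"
  shows "N *\<^sub>v v = 0\<^sub>v n"
proof -
  obtain D P Q where D: "diagonal_mat D" and wit: "similar_mat_wit N D P Q"
    using assms(1) unfolding diagonalizable_mat_def similar_mat_def by blast
  have c: "D \<in> carrier_mat n n" "P \<in> carrier_mat n n" "Q \<in> carrier_mat n n"
    and QP: "Q * P = 1\<^sub>m n" and N_eq: "N = P * D * Q"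
    using wit N unfolding similar_mat_wit_def Let_def by auto
  have N_apply: "N *\<^sub>v x = P *\<^sub>v (D *\<^sub>v (Q *\<^sub>v x))" if "x \<in> carrier_vec n" for x
    using c that unfolding N_eq by (simp add: assoc_mult_mat_vec[of _ n n _ n])
  have QP_apply: "Q *\<^sub>v (P *\<^sub>v x) = x" if "x \<in> carrier_vec n" for x
    using c that QP by (simp flip: assoc_mult_mat_vec)
  define w where "w = Q *\<^sub>v v"
  have w: "w \<in> carrier_vec n" using c v unfolding w_def by simp
  have Nv: "N *\<^sub>v v = P *\<^sub>v (D *\<^sub>v w)" using N_apply[OF v] unfolding w_def .
  have "N *\<^sub>v (N *\<^sub>v v) = P *\<^sub>v (D *\<^sub>v (D *\<^sub>v w))"
    using N_apply[of "N *\<^sub>v v"] N v Nv QP_apply[of "D *\<^sub>v w"] c w by simp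
  hence "P *\<^sub>v (D *\<^sub>v (D *\<^sub>v w)) = 0\<^sub>v n" using square_zero by simp
  hence "Q *\<^sub>v (P *\<^sub>v (D *\<^sub>v (D *\<^sub>v w))) = 0\<^sub>v n" using c(3) by auto
  hence DDw: "D *\<^sub>v (D *\<^sub>v w) = 0\<^sub>v n" using QP_apply[of "D *\<^sub>v (D *\<^sub>v w)"] c w by simp
  have "D *\<^sub>v w = 0\<^sub>v n"
  proof (rule eq_vecI)
    fix i assume "i < dim_vec (0\<^sub>v n :: 'a vec)"
    hence i: "i < n" by simp
    have "D $$ (i, i) * (D $$ (i, i) * w $ i) = 0"
      using arg_cong[OF DDw, of "\<lambda>x. x $ i"] diagonal_mat_mult_vec[OF c(1) D _ i] w c(1) i
      by (simp add: diagonal_mat_mult_vec[OF c(1) D w i])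
    thus "(D *\<^sub>v w) $ i = 0\<^sub>v n $ i" using diagonal_mat_mult_vec[OF c(1) D w i] i by simp
  qed (use c(1) in simp)
  thus ?thesis using Nv c by auto
qed

lemma reflection_eigenvalue_ne_one:
  assumes A: "is_reflection n A" and a: "reflection_vector n A a" and eigen: "A *\<^sub>v a = lam \<cdot>\<^sub>v a"
  shows "lam \<noteq> 1"
proof
  assume lam: "lam = 1"
  let ?N = "A - 1\<^sub>m n"
  have A_carrier: "A \<in> carrier_mat n n" and diag_A: "diagonalizable_mat A"
    using A unfolding is_reflection_def by auto
  have diag: "diagonalizable_mat ?N" by (rule diagonalizable_mat_minus_one[OF diag_A A_carrier])
  have a_carrier: "a \<in> carrier_vec n" by (rule reflection_vector_carrier_vec[OF A_carrier a])
  obtain u where u: "u \<in> carrier_vec n" and a_def: "a = ?N *\<^sub>v u" and a0: "a \<noteq> 0\<^sub>v n"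
    using a unfolding reflection_vector_def by blast
  have "?N *\<^sub>v a = A *\<^sub>v a - a"
    using A_carrier a_carrier by (simp add: minus_mult_distrib_mat_vec)
  also have "\<dots> = 0\<^sub>v n" using eigen lam a_carrier by simp
  finally have "?N *\<^sub>v (?N *\<^sub>v u) = 0\<^sub>v n" unfolding a_def .
  hence "?N *\<^sub>v u = 0\<^sub>v n"
    by (rule diagonalizable_mat_kernel_square[OF diag minus_carrier_mat[OF one_carrier_mat] u])
  thus False using a0 a_def by simp
qed

definition ext_image_meets_fixed :: "nat \<Rightarrow> nat \<Rightarrow> 'a::field mat \<Rightarrow> 'a mat \<Rightarrow> bool" where
  "ext_image_meets_fixed n d A B \<longleftrightarrow> (\<exists>u \<in> ext_space n d. \<exists>w. w = (\<lambda>I. ext_act n d A u I - u I)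
     \<and> w \<noteq> (\<lambda>_. 0) \<and> ext_act n d B w = w)"

lemma ext_space_diff: "f \<in> ext_space n d \<Longrightarrow> g \<in> ext_space n d \<Longrightarrow> (\<lambda>I. f I - g I) \<in> ext_space n d"
  unfolding ext_space_def by auto

lemma ext_image_meets_fixed_transfer:
  fixes T :: "(nat set \<Rightarrow> 'a::field) \<Rightarrow> (nat set \<Rightarrow> 'a)"
  assumes bij: "bij_betw T (ext_space n d) (ext_space n d)"
    and add: "\<And>f g. f \<in> ext_space n d \<Longrightarrow> g \<in> ext_space n d \<Longrightarrow> T (\<lambda>I. f I + g I) = (\<lambda>I. T f I + T g I)"
    and smult: "\<And>c f. f \<in> ext_space n d \<Longrightarrow> T (\<lambda>I. c * f I) = (\<lambda>I. c * T f I)"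
    and A: "\<And>f. f \<in> ext_space n d \<Longrightarrow> T (ext_act n d A f) = ext_act n d A' (T f)"
    and B: "\<And>f. f \<in> ext_space n d \<Longrightarrow> T (ext_act n d B f) = ext_act n d B' (T f)"
  shows "ext_image_meets_fixed n d A B \<longleftrightarrow> ext_image_meets_fixed n d A' B'"
proof -
  let ?E = "ext_space n d"
  let ?P = "\<lambda>A B u. (\<lambda>I. ext_act n d A u I - u I) \<noteq> (\<lambda>_. 0)
     \<and> ext_act n d B (\<lambda>I. ext_act n d A u I - u I) = (\<lambda>I. ext_act n d A u I - u I)"
  have inj: "\<And>f g. f \<in> ?E \<Longrightarrow> g \<in> ?E \<Longrightarrow> T f = T g \<longleftrightarrow> f = g"
    using bij unfolding bij_betw_def inj_on_def by blast
  have zero: "(\<lambda>_. 0) \<in> ?E" unfolding ext_space_def by simp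
  have T_zero: "T (\<lambda>_. 0) = (\<lambda>_. 0)" using smult[OF zero, of 0] by simp
  have diff: "T (\<lambda>I. f I - g I) = (\<lambda>I. T f I - T g I)" if "f \<in> ?E" "g \<in> ?E" for f g
  proof -
    have neg: "(\<lambda>I. (- 1) * g I) \<in> ?E" using that(2) unfolding ext_space_def by simp
    show ?thesis using add[OF that(1) neg] smult[OF that(2), of "- 1"] by simp
  qed
  have equiv: "?P A B u \<longleftrightarrow> ?P A' B' (T u)" if u: "u \<in> ?E" for u
  proof -
    let ?w = "\<lambda>I. ext_act n d A u I - u I"
    have w: "?w \<in> ?E" by (rule ext_space_diff[OF ext_act_in_ext_space u])
    have Tw: "T ?w = (\<lambda>I. ext_act n d A' (T u) I - T u I)"
      using diff[OF ext_act_in_ext_space u] A[OF u] by simp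
    have "?w \<noteq> (\<lambda>_. 0) \<longleftrightarrow> T ?w \<noteq> (\<lambda>_. 0)" using inj[OF w zero] T_zero by simp
    moreover have "ext_act n d B ?w = ?w \<longleftrightarrow> ext_act n d B' (T ?w) = T ?w"
      using inj[OF ext_act_in_ext_space[of n d B ?w] w] B[OF w] by simp
    ultimately show ?thesis unfolding Tw by simp
  qed
  have onto: "T ` ?E = ?E" using bij unfolding bij_betw_def by simp
  have "(\<exists>u \<in> ?E. ?P A B u) \<longleftrightarrow> (\<exists>u \<in> ?E. ?P A' B' u)"
  proof
    assume "\<exists>u \<in> ?E. ?P A B u"
    then obtain u where "u \<in> ?E" "?P A B u" by blast
    moreover have "T u \<in> ?E" using onto \<open>u \<in> ?E\<close> by blast
    ultimately show "\<exists>u \<in> ?E. ?P A' B' u" using equiv by (intro bexI[of _ "T u"]) simp_all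
  next
    assume "\<exists>v \<in> ?E. ?P A' B' v"
    then obtain v where "v \<in> ?E" "?P A' B' v" by blast
    moreover obtain u where "u \<in> ?E" "v = T u" using onto \<open>v \<in> ?E\<close> by (metis imageE)
    ultimately show "\<exists>u \<in> ?E. ?P A B u" using equiv by (intro bexI[of _ u]) simp_all
  qed
  thus ?thesis unfolding ext_image_meets_fixed_def by simp
qed

lemma ext_iso_image_meets_fixed_iff:
  assumes iso: "ext_iso W n d \<rho>1 \<rho>2 \<psi>" and a: "a \<in> carrier W" and b: "b \<in> carrier W"
  shows "ext_image_meets_fixed n d (\<rho>1 a) (\<rho>1 b) \<longleftrightarrow> ext_image_meets_fixed n d (\<rho>2 a) (\<rho>2 b)"
proof -
  have bij: "bij_betw \<psi> (ext_space n d) (ext_space n d)"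
    and add: "\<And>f h. f \<in> ext_space n d \<Longrightarrow> h \<in> ext_space n d \<Longrightarrow> \<psi> (\<lambda>I. f I + h I) = (\<lambda>I. \<psi> f I + \<psi> h I)"
    and smult: "\<And>c f. f \<in> ext_space n d \<Longrightarrow> \<psi> (\<lambda>I. c * f I) = (\<lambda>I. c * \<psi> f I)"
    and act: "\<And>g f. g \<in> carrier W \<Longrightarrow> f \<in> ext_space n d \<Longrightarrow>
       \<psi> (ext_act n d (\<rho>1 g) f) = ext_act n d (\<rho>2 g) (\<psi> f)"
    using iso unfolding ext_iso_def by auto
  show ?thesis by (rule ext_image_meets_fixed_transfer[OF bij add smult act[OF a] act[OF b]])
qed

lemma ext_image_meets_fixed_conj:
  fixes S P A B :: "'a::field mat"
  assumes S: "S \<in> carrier_mat n n" and P: "P \<in> carrier_mat n n"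
    and SP: "S * P = 1\<^sub>m n" and PS: "P * S = 1\<^sub>m n"
    and A: "A \<in> carrier_mat n n" and B: "B \<in> carrier_mat n n"
  shows "ext_image_meets_fixed n d A B \<longleftrightarrow> ext_image_meets_fixed n d (S * A * P) (S * B * P)"
proof (rule ext_image_meets_fixed_transfer)
  have inverse: "ext_act n d X (ext_act n d Y f) = f"
    if "X \<in> carrier_mat n n" "Y \<in> carrier_mat n n" "X * Y = 1\<^sub>m n" "f \<in> ext_space n d" for X Y f
    using ext_act_mult[OF that(1,2), of d f] ext_act_one[OF that(4)] that(3) by simp
  show "bij_betw (ext_act n d S) (ext_space n d) (ext_space n d)"
    by (rule bij_betw_byWitness[where f' = "ext_act n d P"])
      (use inverse[OF P S PS] inverse[OF S P SP] ext_act_in_ext_space in auto)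
  have conj: "ext_act n d S (ext_act n d C f) = ext_act n d (S * C * P) (ext_act n d S f)"
    if C: "C \<in> carrier_mat n n" for C f
  proof -
    have SC: "S * C \<in> carrier_mat n n" using S C by simp
    have "S * C * P * S = S * C * (P * S)" by (rule assoc_mult_mat[OF SC P S])
    also have "\<dots> = S * C" using PS right_mult_one_mat[OF SC] by simp
    finally have "ext_act n d (S * C * P) (ext_act n d S f) = ext_act n d (S * C) f"
      using ext_act_mult[OF mult_carrier_mat[OF SC P] S] by simp
    thus ?thesis using ext_act_mult[OF S C] by simp
  qed
  show "\<And>f. ext_act n d S (ext_act n d A f) = ext_act n d (S * A * P) (ext_act n d S f)"
    "\<And>f. ext_act n d S (ext_act n d B f) = ext_act n d (S * B * P) (ext_act n d S f)"
    using conj[OF A] conj[OF B] by simp_all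
qed (simp_all add: ext_act_add ext_act_smult)

subsection \<open>Obstruction when the coupling is nonzero\<close>

lemma ext_act_eq_on_rows:
  assumes A: "A \<in> carrier_mat n n" and A': "A' \<in> carrier_mat n n" and I: "I \<in> dsubsets n d"
    and rows: "\<And>i j. i \<in> I \<Longrightarrow> j < n \<Longrightarrow> A $$ (i, j) = A' $$ (i, j)"
  shows "ext_act n d A f I = ext_act n d A' f I"
proof -
  have "submatrix A I J = submatrix A' I J" if J: "J \<in> dsubsets n d" for J
  proof (rule eq_matI)
    fix a t assume "a < dim_row (submatrix A' I J)" "t < dim_col (submatrix A' I J)"
    hence "a < d" "t < d" using submatrix_dsubsets_carrier_mat[OF A' I J] by simp_all
    thus "submatrix A I J $$ (a, t) = submatrix A' I J $$ (a, t)"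
      using rows[OF pick_in_dsubset[OF I] pick_dsubset_less[OF J]]
      by (simp add: submatrix_dsubsets_index[OF A I J] submatrix_dsubsets_index[OF A' I J])
  qed (use submatrix_dsubsets_carrier_mat[OF A I J] submatrix_dsubsets_carrier_mat[OF A' I J] in simp_all)
  thus ?thesis unfolding ext_act_def by (simp cong: sum.cong)
qed

lemma ext_act_identity_except_col:
  fixes B :: "'a::field mat"
  assumes B: "B \<in> carrier_mat n n" and p: "p < n"
    and cols: "\<And>i j. i < n \<Longrightarrow> j < n \<Longrightarrow> j \<noteq> p \<Longrightarrow> B $$ (i, j) = (if i = j then 1 else 0)"
    and I: "I \<in> dsubsets n d" and pI: "p \<in> I"
    and w: "\<And>J. J \<in> dsubsets n d \<Longrightarrow> p \<notin> J \<Longrightarrow> w J = 0"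
  shows "ext_act n d B w I = B $$ (p, p) * w I"
proof -
  have I_less: "i \<in> I \<Longrightarrow> i < n" for i using dsubsetsD(1)[OF I] by blast
  have "det (submatrix B I J) * w J = (if J = I then B $$ (p, p) * w I else 0)"
    if J: "J \<in> dsubsets n d" for J
  proof (cases "J = I")
    case True
    thus ?thesis using det_submatrix_identity_except_col[OF B I pI] cols I_less by simp
  next
    case False
    show ?thesis
    proof (cases "p \<in> J")
      case True
      have "\<not> J \<subseteq> I" using False dsubsetsD[OF I] dsubsetsD[OF J] card_subset_eq by metis
      then obtain j where j: "j \<in> J" "j \<notin> I" by blast
      have "j < n" "j \<noteq> p" using j pI dsubsetsD(1)[OF J] by auto
      hence "det (submatrix B I J) = 0"
        using j cols I_less by (intro det_submatrix_dsubsets_zero_col[OF B I J j(1)]) auto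
      thus ?thesis using False by simp
    qed (use False w[OF J] in simp)
  qed
  hence "ext_act n d B w I = (\<Sum>J \<in> dsubsets n d. if J = I then B $$ (p, p) * w I else 0)"
    unfolding ext_act_def using I by (simp cong: sum.cong)
  thus ?thesis using I finite_dsubsets by simp
qed

(* The image of the exterior power of A - 1 is supported on the index sets containing p,
   and on those the exterior power of B acts by the factor B(p,p). *)
lemma not_ext_image_meets_fixed_normal_form:
  fixes A B :: "'a::field mat"
  assumes A: "A \<in> carrier_mat n n" and B: "B \<in> carrier_mat n n" and p: "p < n"
    and rows: "\<And>i j. i < n \<Longrightarrow> j < n \<Longrightarrow> i \<noteq> p \<Longrightarrow> A $$ (i, j) = (if i = j then 1 else 0)"
    and cols: "\<And>i j. i < n \<Longrightarrow> j < n \<Longrightarrow> j \<noteq> p \<Longrightarrow> B $$ (i, j) = (if i = j then 1 else 0)"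
    and B_pp: "B $$ (p, p) \<noteq> 1"
  shows "\<not> ext_image_meets_fixed n d A B"
proof
  assume "ext_image_meets_fixed n d A B"
  then obtain u w where u: "u \<in> ext_space n d" and w_def: "w = (\<lambda>I. ext_act n d A u I - u I)"
    and w0: "w \<noteq> (\<lambda>_. 0)" and fixed: "ext_act n d B w = w"
    unfolding ext_image_meets_fixed_def by blast
  have outside: "w I = 0" if I: "I \<in> dsubsets n d" and pI: "p \<notin> I" for I
  proof -
    have "ext_act n d A u I = ext_act n d (1\<^sub>m n) u I"
    proof (rule ext_act_eq_on_rows[OF A one_carrier_mat I])
      fix i j assume "i \<in> I" "j < n"
      moreover have "i < n" "i \<noteq> p" using \<open>i \<in> I\<close> dsubsetsD(1)[OF I] pI by auto
      ultimately show "A $$ (i, j) = 1\<^sub>m n $$ (i, j)" using rows by simp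
    qed
    thus ?thesis unfolding w_def ext_act_one[OF u] by simp
  qed
  have inside: "w I = 0" if I: "I \<in> dsubsets n d" and pI: "p \<in> I" for I
  proof -
    have "ext_act n d B w I = B $$ (p, p) * w I"
      by (rule ext_act_identity_except_col[OF B p _ I pI]) (simp_all add: cols outside)
    hence "w I = B $$ (p, p) * w I" using fixed by simp
    thus ?thesis using B_pp by (metis mult_cancel_right1)
  qed
  have "w I = 0" for I
    using outside inside u ext_act_in_ext_space[of n d A u]
    unfolding w_def ext_space_def by (cases "I \<in> dsubsets n d") auto
  thus False using w0 by auto
qed

lemma mult_rank_one_update_mult_index:
  fixes S P :: "'a::comm_ring_1 mat"
  assumes S: "S \<in> carrier_mat n n" and P: "P \<in> carrier_mat n n" and a: "a \<in> carrier_vec n"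
    and i: "i < n" and j: "j < n"
  shows "(S * rank_one_update n a f * P) $$ (i, j) = (S * P) $$ (i, j) + (S *\<^sub>v a) $ i * (f \<bullet> col P j)"
proof -
  let ?R = "rank_one_update n a f"
  have "S * ?R * P = S * (?R * P)" by (rule assoc_mult_mat[OF S _ P]) simp
  hence "(S * ?R * P) $$ (i, j) = row S i \<bullet> col (?R * P) j" using S P i j by simp
  also have "col P j \<in> carrier_vec n" using P j by simp
  hence "col (?R * P) j = col P j + (f \<bullet> col P j) \<cdot>\<^sub>v a"
    using col_mult2[OF rank_one_update_carrier_mat P j] rank_one_update_mult_vec[OF a] by simp
  also have "row S i \<bullet> (col P j + (f \<bullet> col P j) \<cdot>\<^sub>v a) = row S i \<bullet> col P j + (f \<bullet> col P j) * (row S i \<bullet> a)"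
    using S P a i j by (simp add: scalar_prod_add_distrib[of _ n] scalar_prod_smult_distrib[of _ n])
  finally show ?thesis using S P a i j by simp
qed

(* The basis given by the columns of P starts with a at position p and completes it by
   a basis of ker h. *)
lemma obtain_adapted_change_of_basis:
  fixes a h :: "'a::field vec"
  assumes a: "a \<in> carrier_vec n" and h: "h \<in> carrier_vec n" and p: "p < n"
    and ap: "a $ p \<noteq> 0" and ha: "h \<bullet> a \<noteq> 0"
  obtains S P where "S \<in> carrier_mat n n" "P \<in> carrier_mat n n" "S * P = 1\<^sub>m n" "P * S = 1\<^sub>m n"
    "S *\<^sub>v a = unit_vec n p" "\<And>v. v \<in> carrier_vec n \<Longrightarrow> (S *\<^sub>v v) $ p = (h \<bullet> v) / (h \<bullet> a)"
proof -
  define S where "S = mat n n (\<lambda>(k, j). if k = p then h $ j / (h \<bullet> a)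
     else (if k = j then 1 else 0) - (if j = p then a $ k / a $ p else 0))"
  have S: "S \<in> carrier_mat n n" unfolding S_def by simp
  have S_apply: "(S *\<^sub>v v) $ k = (if k = p then (h \<bullet> v) / (h \<bullet> a) else v $ k - a $ k / a $ p * v $ p)"
    if v: "v \<in> carrier_vec n" and k: "k < n" for v k
  proof -
    have "(S *\<^sub>v v) $ k = (\<Sum>j = 0..<n. S $$ (k, j) * v $ j)" using S v k by (simp add: scalar_prod_def)
    also have "\<dots> = (if k = p then (\<Sum>j = 0..<n. h $ j * v $ j) / (h \<bullet> a)
        else (\<Sum>j = 0..<n. (if k = j then v $ j else 0) - (if j = p then a $ k / a $ p * v $ j else 0)))"
      using k by (auto simp: S_def sum_divide_distrib algebra_simps intro: sum.cong)
    also have "\<dots> = (if k = p then (h \<bullet> v) / (h \<bullet> a) else v $ k - a $ k / a $ p * v $ p)"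
      using k p v by (simp add: scalar_prod_def sum_subtractf)
    finally show ?thesis .
  qed
  have Sa: "S *\<^sub>v a = unit_vec n p"
    using S_apply[OF a] a S ap ha p by (intro eq_vecI) auto
  have "det S \<noteq> 0"
  proof
    assume "det S = 0"
    then obtain v where v: "v \<in> carrier_vec n" "v \<noteq> 0\<^sub>v n" "S *\<^sub>v v = 0\<^sub>v n"
      using det_0_iff_vec_prod_zero_field[OF S] by blast
    define c where "c = v $ p / a $ p"
    have v_eq: "v = c \<cdot>\<^sub>v a"
    proof (rule eq_vecI)
      fix k assume "k < dim_vec (c \<cdot>\<^sub>v a)"
      hence k: "k < n" using a by simp
      have "(S *\<^sub>v v) $ k = 0" using v(3) k by simp
      thus "v $ k = (c \<cdot>\<^sub>v a) $ k"
        using S_apply[OF v(1) k] k a ap unfolding c_def by (cases "k = p") (auto simp: field_simps)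
    qed (use v a in simp)
    have "(S *\<^sub>v v) $ p = 0" using v(3) p by simp
    hence "h \<bullet> v = 0" using S_apply[OF v(1) p] ha by simp
    moreover have "h \<bullet> v = c * (h \<bullet> a)" unfolding v_eq using h a by simp
    ultimately have "c = 0" using ha by simp
    hence "v = 0\<^sub>v n" unfolding v_eq using a by (intro eq_vecI) auto
    thus False using v(2) by simp
  qed
  then obtain P where P: "P \<in> carrier_mat n n" and SP: "S * P = 1\<^sub>m n" and PS: "P * S = 1\<^sub>m n"
    using det_non_zero_imp_unit[OF S, of undefined] unfolding Units_def ring_mat_simps by auto
  show thesis by (rule that[OF S P SP PS Sa]) (simp add: S_apply p)
qed

lemma not_ext_image_meets_fixed_rank_one:
  fixes a b f h :: "'a::field vec"
  assumes a: "a \<in> carrier_vec n" "a \<noteq> 0\<^sub>v n" and b: "b \<in> carrier_vec n" and h: "h \<in> carrier_vec n"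
    and ha: "h \<bullet> a \<noteq> 0" and hb: "h \<bullet> b \<noteq> 0"
  shows "\<not> ext_image_meets_fixed n d (rank_one_update n a f) (rank_one_update n b h)"
proof -
  obtain p where p: "p < n" "a $ p \<noteq> 0" using nonzero_vec_entry[OF a] .
  obtain S P where S: "S \<in> carrier_mat n n" and P: "P \<in> carrier_mat n n"
    and SP: "S * P = 1\<^sub>m n" and PS: "P * S = 1\<^sub>m n" and Sa: "S *\<^sub>v a = unit_vec n p"
    and S_p: "\<And>v. v \<in> carrier_vec n \<Longrightarrow> (S *\<^sub>v v) $ p = (h \<bullet> v) / (h \<bullet> a)"
    using obtain_adapted_change_of_basis[OF a(1) h p ha] by blast
  have h_col: "h \<bullet> col P j = (if p = j then h \<bullet> a else 0)" if j: "j < n" for j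
  proof -
    have "S *\<^sub>v col P j = unit_vec n j" using col_mult2[OF S P j] SP j by simp
    thus ?thesis using S_p[of "col P j"] P j p ha by (auto simp: field_simps split: if_splits)
  qed
  have "\<not> ext_image_meets_fixed n d (S * rank_one_update n a f * P) (S * rank_one_update n b h * P)"
  proof (rule not_ext_image_meets_fixed_normal_form[OF _ _ p(1)])
    show "(S * rank_one_update n a f * P) $$ (i, j) = (if i = j then 1 else 0)"
      if "i < n" "j < n" "i \<noteq> p" for i j
      using that mult_rank_one_update_mult_index[OF S P a(1) that(1,2)] SP Sa p(1) by simp
    show "(S * rank_one_update n b h * P) $$ (i, j) = (if i = j then 1 else 0)"
      if "i < n" "j < n" "j \<noteq> p" for i j
      using that mult_rank_one_update_mult_index[OF S P b that(1,2)] SP h_col by simp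
    show "(S * rank_one_update n b h * P) $$ (p, p) \<noteq> 1"
      using mult_rank_one_update_mult_index[OF S P b p(1) p(1)] SP h_col[OF p(1)] S_p[OF b] p ha hb
      by simp
  qed (rule mult_carrier_mat[OF mult_carrier_mat[OF S rank_one_update_carrier_mat] P])+
  thus ?thesis using ext_image_meets_fixed_conj[OF S P SP PS] by simp
qed

subsection \<open>Construction when the coupling vanishes\<close>

lemma ext_image_meets_fixed_of_pluecker:
  fixes A B V T :: "'a::field mat"
  assumes A: "A \<in> carrier_mat n n" and B: "B \<in> carrier_mat n n"
    and V: "V \<in> carrier_mat n d" and T: "T \<in> carrier_mat d d"
    and AV: "A * V = V * T" and BV: "B * V = V" and det_T: "det T \<noteq> 1"
    and nonzero: "pluecker n d V \<noteq> (\<lambda>_. 0)"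
  shows "ext_image_meets_fixed n d A B"
proof -
  let ?w = "pluecker n d V"
  define u where "u = (\<lambda>I. inverse (det T - 1) * ?w I)"
  have u: "u \<in> ext_space n d" unfolding u_def pluecker_def ext_space_def by simp
  have "ext_act n d A ?w = (\<lambda>I. det T * ?w I)"
    using ext_act_pluecker[OF A V] pluecker_mult[OF V T] AV by simp
  hence "(\<lambda>I. ext_act n d A u I - u I) = (\<lambda>I. inverse (det T - 1) * (det T - 1) * ?w I)"
    unfolding u_def ext_act_smult by (simp add: algebra_simps)
  also have "\<dots> = ?w" using det_T by simp
  finally have "(\<lambda>I. ext_act n d A u I - u I) = ?w" .
  moreover have "ext_act n d B ?w = ?w" using ext_act_pluecker[OF B V] BV by simp
  ultimately show ?thesis
    unfolding ext_image_meets_fixed_def using nonzero by (intro bexI[OF _ u]) simp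
qed

lemma rank_one_update_mult_kernel:
  assumes V: "V \<in> carrier_mat n d" and b: "b \<in> carrier_vec n"
    and kernel: "\<And>t. t < d \<Longrightarrow> h \<bullet> col V t = 0"
  shows "rank_one_update n b h * V = V"
proof (rule mat_col_eqI)
  fix t assume "t < dim_col V"
  hence t: "t < d" using V by simp
  have "col V t \<in> carrier_vec n" using V t by simp
  moreover have "0 \<cdot>\<^sub>v b = 0\<^sub>v n" using b by (intro eq_vecI) auto
  ultimately show "col (rank_one_update n b h * V) t = col V t"
    using col_mult2[OF rank_one_update_carrier_mat V t] rank_one_update_mult_vec[OF b] kernel[OF t]
    by simp
qed (use V in simp_all)

lemma rank_one_update_mult_col:
  assumes V: "V \<in> carrier_mat n d" and a: "a \<in> carrier_vec n" and f: "f \<in> carrier_vec n"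
    and s: "s < d" and col_s: "col V s = a"
  shows "rank_one_update n a f * V = V * rank_one_update d (unit_vec d s) (transpose_mat V *\<^sub>v f)"
    (is "_ = V * ?T")
proof (rule eq_matI)
  fix i t assume "i < dim_row (V * ?T)" "t < dim_col (V * ?T)"
  hence i: "i < n" and t: "t < d" using V by simp_all
  have Vt: "col V t \<in> carrier_vec n" using V t by simp
  have "(rank_one_update n a f * V) $$ (i, t) = col (rank_one_update n a f * V) t $ i"
    using V i t by simp
  also have "\<dots> = (col V t + (f \<bullet> col V t) \<cdot>\<^sub>v a) $ i"
    using col_mult2[OF rank_one_update_carrier_mat V t] rank_one_update_mult_vec[OF a Vt] by simp
  also have "\<dots> = V $$ (i, t) + V $$ (i, s) * (f \<bullet> col V t)"
    using a V i t col_s[symmetric] s by simp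
  also have "\<dots> = (\<Sum>k = 0..<d. (if k = t then V $$ (i, k) else 0)
      + (if k = s then V $$ (i, k) * (f \<bullet> col V t) else 0))"
    using t s by (simp add: sum.distrib)
  also have "\<dots> = (\<Sum>k = 0..<d. V $$ (i, k) * ?T $$ (k, t))"
    using V f t s by (intro sum.cong) (auto simp: comm_scalar_prod[of f n] algebra_simps)
  also have "\<dots> = (V * ?T) $$ (i, t)"
    using V i t by (simp add: scalar_prod_def)
  finally show "(rank_one_update n a f * V) $$ (i, t) = (V * ?T) $$ (i, t)" .
qed (use V in simp_all)

lemma det_rank_one_update_unit_vec:
  "s < d \<Longrightarrow> det (rank_one_update d (unit_vec d s) c :: 'a::comm_ring_1 mat) = 1 + c $ s"
  by (subst det_identity_except_row[of _ d s]) auto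

(* The columns are a and, for q in I - {p}, the vectors e_q - (h_q / h_r) e_r of ker h;
   their minor on the rows I equals a_p. *)
lemma obtain_kernel_frame:
  fixes a h :: "'a::field vec"
  assumes a: "a \<in> carrier_vec n" and h: "h \<in> carrier_vec n" and ha: "h \<bullet> a = 0"
    and p: "p < n" "a $ p \<noteq> 0" and r: "r < n" "r \<noteq> p" "h $ r \<noteq> 0"
    and d: "1 \<le> d" "d \<le> n - 1"
  obtains V s where "V \<in> carrier_mat n d" "s < d" "col V s = a"
    "\<And>t. t < d \<Longrightarrow> h \<bullet> col V t = 0" "pluecker n d V \<noteq> (\<lambda>_. 0)"
proof -
  obtain I where I: "I \<in> dsubsets n d" and pI: "p \<in> I" and rI: "r \<notin> I"
    using obtain_dsubset_containing_avoiding[OF p(1) r(1,2) d] .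
  define s where "s = card {i \<in> I. i < p}"
  have s: "s < d" "pick I s = p"
    using position_in_dsubset[OF I pI] pick_card_in_set[OF pI] unfolding s_def by simp_all
  define V where "V = mat n d (\<lambda>(i, t). if t = s then a $ i
     else (if i = pick I t then 1 else 0) - (if i = r then h $ pick I t / h $ r else 0))"
  have V: "V \<in> carrier_mat n d" unfolding V_def by simp
  have col_s: "col V s = a" using a s unfolding V_def by (intro eq_vecI) auto
  have "h \<bullet> col V t = 0" if t: "t < d" for t
  proof (cases "t = s")
    case False
    have q: "pick I t < n" "pick I t \<noteq> r" using pick_dsubset_less[OF I t] pick_in_dsubset[OF I t] rI by auto
    have "h \<bullet> col V t = (\<Sum>i = 0..<n. (if i = pick I t then h $ i else 0)
        - (if i = r then h $ r * (h $ pick I t / h $ r) else 0))"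
      using h t False unfolding V_def scalar_prod_def by (intro sum.cong) (auto simp: algebra_simps)
    also have "\<dots> = 0" using q r by (simp add: sum_subtractf)
    finally show ?thesis .
  qed (use ha a t col_s in simp)
  moreover have "pluecker n d V I \<noteq> 0"
  proof -
    have sub: "submatrix V I UNIV \<in> carrier_mat d d" by (rule submatrix_rows_carrier_mat[OF V I])
    have entry: "submatrix V I UNIV $$ (k, t) = V $$ (pick I k, t)" if "k < d" "t < d" for k t
      by (rule submatrix_rows_index[OF V I that])
    have "det (submatrix V I UNIV) = submatrix V I UNIV $$ (s, s)"
    proof (rule det_identity_except_col[OF sub s(1)])
      fix k t assume k: "k < d" and t: "t < d" and "t \<noteq> s"
      moreover have "pick I k \<noteq> r" using pick_in_dsubset[OF I k] rI by auto
      ultimately show "submatrix V I UNIV $$ (k, t) = (if k = t then 1 else 0)"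
        using entry[OF k t] pick_dsubset_less[OF I k] pick_dsubset_eq_iff[OF I k t]
        unfolding V_def by simp
    qed
    thus ?thesis using entry[OF s(1) s(1)] s p I unfolding pluecker_def V_def by simp
  qed
  hence "pluecker n d V \<noteq> (\<lambda>_. 0)" by (metis)
  ultimately show thesis using that[OF V s(1) col_s] by blast
qed

lemma ext_image_meets_fixed_rank_one:
  fixes a b f h :: "'a::field vec"
  assumes a: "a \<in> carrier_vec n" "a \<noteq> 0\<^sub>v n" and b: "b \<in> carrier_vec n" and f: "f \<in> carrier_vec n"
    and h: "h \<in> carrier_vec n" "h \<noteq> 0\<^sub>v n" and ha: "h \<bullet> a = 0" and fa: "f \<bullet> a \<noteq> 0"
    and d: "1 \<le> d" "d \<le> n - 1"
  shows "ext_image_meets_fixed n d (rank_one_update n a f) (rank_one_update n b h)"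
proof -
  obtain p where p: "p < n" "a $ p \<noteq> 0" using nonzero_vec_entry[OF a] .
  have "\<exists>r<n. r \<noteq> p \<and> h $ r \<noteq> 0"
  proof (rule ccontr)
    assume "\<not> ?thesis"
    hence others: "r < n \<Longrightarrow> r \<noteq> p \<Longrightarrow> h $ r = 0" for r by blast
    have "h \<bullet> a = h $ p * a $ p"
      using others p a unfolding scalar_prod_def by (subst sum.remove[of _ p]) auto
    hence "h $ p = 0" using ha p by simp
    hence "h = 0\<^sub>v n" using others h by (intro eq_vecI) auto
    thus False using h(2) by simp
  qed
  then obtain r where r: "r < n" "r \<noteq> p" "h $ r \<noteq> 0" by blast
  obtain V s where V: "V \<in> carrier_mat n d" and s: "s < d" and col_s: "col V s = a"
    and kernel: "\<And>t. t < d \<Longrightarrow> h \<bullet> col V t = 0" and nonzero: "pluecker n d V \<noteq> (\<lambda>_. 0)"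
    using obtain_kernel_frame[OF a(1) h(1) ha p r d] by blast
  let ?T = "rank_one_update d (unit_vec d s) (transpose_mat V *\<^sub>v f)"
  have "(transpose_mat V *\<^sub>v f) $ s = col V s \<bullet> f" using V s by simp
  also have "\<dots> = f \<bullet> a" using col_s comm_scalar_prod[OF a(1) f] by simp
  finally have "det ?T = 1 + f \<bullet> a" by (subst det_rank_one_update_unit_vec[OF s]) simp
  thus ?thesis
    using fa by (intro ext_image_meets_fixed_of_pluecker[OF _ _ V _
          rank_one_update_mult_col[OF V a(1) f s col_s] rank_one_update_mult_kernel[OF V b kernel]
          _ nonzero]) simp_all
qed

lemma rank_one_update_coefficient:
  fixes a v :: "'a::idom vec"
  assumes a: "a \<in> carrier_vec n" and v: "v \<in> carrier_vec n" and p: "p < n" "a $ p \<noteq> 0"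
    and apply_p: "(rank_one_update n a f *\<^sub>v v) $ p = v $ p + c * a $ p"
  shows "f \<bullet> v = c"
proof -
  have "(f \<bullet> v) * a $ p = c * a $ p"
    using apply_p rank_one_update_mult_vec[OF a v] a v p by (simp add: mult.commute)
  thus ?thesis using p(2) by simp
qed

lemma ext_image_meets_fixed_reflections_iff:
  fixes A B :: "'a::field mat"
  assumes A: "is_reflection n A" and a: "reflection_vector n A a" and eigen_a: "A *\<^sub>v a = lam \<cdot>\<^sub>v a"
    and B: "is_reflection n B" and b: "reflection_vector n B b" and eigen_b: "B *\<^sub>v b = mu \<cdot>\<^sub>v b"
    and Ba: "B *\<^sub>v a = a + x \<cdot>\<^sub>v b" and d: "1 \<le> d" "d \<le> n - 1"
  shows "ext_image_meets_fixed n d A B \<longleftrightarrow> x = 0"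
proof -
  obtain f where f: "f \<in> carrier_vec n" and A_eq: "A = rank_one_update n a f"
    using reflection_eq_rank_one_update[OF A a] .
  obtain h where h: "h \<in> carrier_vec n" and B_eq: "B = rank_one_update n b h"
    using reflection_eq_rank_one_update[OF B b] .
  have a_carrier: "a \<in> carrier_vec n" and b_carrier: "b \<in> carrier_vec n"
    using reflection_vector_carrier_vec A B a b unfolding is_reflection_def by blast+
  have a0: "a \<noteq> 0\<^sub>v n" and b0: "b \<noteq> 0\<^sub>v n" using a b unfolding reflection_vector_def by simp_all
  obtain p where p: "p < n" "a $ p \<noteq> 0" using nonzero_vec_entry[OF a_carrier a0] .
  obtain q where q: "q < n" "b $ q \<noteq> 0" using nonzero_vec_entry[OF b_carrier b0] .
  have "f \<bullet> a = lam - 1"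
    using eigen_a a_carrier p unfolding A_eq
    by (intro rank_one_update_coefficient[OF a_carrier a_carrier p]) (simp add: algebra_simps)
  hence fa: "f \<bullet> a \<noteq> 0" using reflection_eigenvalue_ne_one[OF A a eigen_a] by simp
  have "h \<bullet> b = mu - 1"
    using eigen_b b_carrier q unfolding B_eq
    by (intro rank_one_update_coefficient[OF b_carrier b_carrier q]) (simp add: algebra_simps)
  hence hb: "h \<bullet> b \<noteq> 0" using reflection_eigenvalue_ne_one[OF B b eigen_b] by simp
  have ha: "h \<bullet> a = x"
    using Ba a_carrier b_carrier q unfolding B_eq
    by (intro rank_one_update_coefficient[OF b_carrier a_carrier q]) simp
  have h0: "h \<noteq> 0\<^sub>v n" using hb b_carrier by auto
  show ?thesis
  proof (cases "x = 0")
    case True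
    thus ?thesis unfolding A_eq B_eq
      using ext_image_meets_fixed_rank_one[OF a_carrier a0 b_carrier f h h0 _ fa d] ha by simp
  next
    case False
    thus ?thesis unfolding A_eq B_eq
      using not_ext_image_meets_fixed_rank_one[OF a_carrier a0 b_carrier h _ hb] ha by simp
  qed
qed

theorem corollary5p10:
  fixes W :: "('g, 'b) monoid_scheme"
    and s :: "nat \<Rightarrow> 'g" and k n d :: nat
    and \<rho>1 \<rho>2 :: "'g \<Rightarrow> 'a::field_char_0 mat"
    and \<alpha> \<beta> :: "nat \<Rightarrow> 'a vec" and lam mu :: "nat \<Rightarrow> 'a"
    and x y :: "nat \<Rightarrow> nat \<Rightarrow> 'a"
    and \<psi> :: "(nat set \<Rightarrow> 'a) \<Rightarrow> (nat set \<Rightarrow> 'a)"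
  assumes "group W"
    and "s ` {..<k} \<subseteq> carrier W"
    and "generate W (s ` {..<k}) = carrier W"
    and "irreducible_rep W n \<rho>1" and "reflection_rep W k s n \<rho>1"
    and "irreducible_rep W n \<rho>2" and "reflection_rep W k s n \<rho>2"
    and "\<And>i. i < k \<Longrightarrow> reflection_vector n (\<rho>1 (s i)) (\<alpha> i)
                \<and> \<rho>1 (s i) *\<^sub>v \<alpha> i = lam i \<cdot>\<^sub>v \<alpha> i"
    and "\<And>i. i < k \<Longrightarrow> reflection_vector n (\<rho>2 (s i)) (\<beta> i)
                \<and> \<rho>2 (s i) *\<^sub>v \<beta> i = mu i \<cdot>\<^sub>v \<beta> i"
    and "1 \<le> d" and "d \<le> n - 1"
    and "ext_iso W n d \<rho>1 \<rho>2 \<psi>"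
    and "\<And>a b. a < k \<Longrightarrow> b < k \<Longrightarrow> a \<noteq> b \<Longrightarrow>
           \<rho>1 (s b) *\<^sub>v \<alpha> a = \<alpha> a + x a b \<cdot>\<^sub>v \<alpha> b"
    and "\<And>a b. a < k \<Longrightarrow> b < k \<Longrightarrow> a \<noteq> b \<Longrightarrow>
           \<rho>2 (s b) *\<^sub>v \<beta> a = \<beta> a + y a b \<cdot>\<^sub>v \<beta> b"
    and "i < k" and "j < k" and "i \<noteq> j"
  shows "x i j = 0 \<longleftrightarrow> y i j = 0"
proof -
  note refl1 = assms(5)[unfolded reflection_rep_def] and refl2 = assms(7)[unfolded reflection_rep_def]
  have carrier: "s i \<in> carrier W" "s j \<in> carrier W" using assms(2,15,16) by auto
  have "x i j = 0 \<longleftrightarrow> ext_image_meets_fixed n d (\<rho>1 (s i)) (\<rho>1 (s j))"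
    using refl1 assms(8)[OF assms(15)] assms(8)[OF assms(16)] assms(10,11,13,15-17)
    by (intro ext_image_meets_fixed_reflections_iff[symmetric]) auto
  also have "\<dots> \<longleftrightarrow> ext_image_meets_fixed n d (\<rho>2 (s i)) (\<rho>2 (s j))"
    by (rule ext_iso_image_meets_fixed_iff[OF assms(12) carrier])
  also have "\<dots> \<longleftrightarrow> y i j = 0"
    using refl2 assms(9)[OF assms(15)] assms(9)[OF assms(16)] assms(10,11,14-17)
    by (intro ext_image_meets_fixed_reflections_iff) auto
  finally show ?thesis .
qed

end
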